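(* Let $J'=(z_w,z_w')$ be a nonempty open interval, let $r:J'\to\mathbb{R}$ be differentiable, non-increasing, with $|r(z)|<1$ on $J'$, and suppose $r$ has a unique zero $z_r\in J'$. Let $h:J'\to\mathbb{R}$ be differentiable with $\dot h(z)=1+h(z)^2-2r(z)h(z)$ on $J'$, having exactly one zero $z_*\in J'$. Let $G(z)=z-\dfrac{2h(z)}{2+h(z)^2-2r(z)h(z)}$. Then for every initial guess $z_0$ in the closed interval with endpoints $z_r$ and $z_*$ (in particular for $z_0=z_r$), the iteration $z_{n+1}=G(z_n)$ is well defined and $(z_n)$ converges monotonically to $z_*$.
   Context: $\dot{}$ denotes differentiation with respect to $z$. "Converges monotonically" means all iterates lie in $J'$, the sequence is monotone, and its limit is $z_*$. *)

theory Defs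
  imports Complex_Main
begin

definition G_map :: "(real \<Rightarrow> real) \<Rightarrow> (real \<Rightarrow> real) \<Rightarrow> real \<Rightarrow> real" where
  "G_map r h z = z - 2 * h z / (2 + (h z)^2 - 2 * r z * h z)"

end

theory Submission
  imports Defs
begin

(*
  Freeze r at the current point z and consider \<phi>(w) = w - 2 h(w) / (2 + h(w)\<^sup>2 - 2 r(z) h(w)).
  Its derivative is 1 - (4 - 2 h\<^sup>2) h' / D\<^sup>2, which is nonnegative as long as
  0 \<le> h' \<le> 1 + h\<^sup>2 - 2 r(z) h. Since |r| < 1, the Riccati right-hand side is positive, so h
  is strictly increasing and has the sign of w - zs; as r is non-increasing, the bound
  therefore holds between z and zs. Hence G(z) = \<phi>(z) lies between z and \<phi>(zs) = zs:
  the orbit is monotone and trapped between z0 and zs, so it converges to a fixed point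
  of G, i.e. to a zero of h, which is zs.
*)

lemma riccati_rhs_pos:
  fixes s y :: real
  assumes "\<bar>s\<bar> < 1"
  shows "0 < 1 + y\<^sup>2 - 2 * s * y"
proof -
  have "1 + y\<^sup>2 - 2 * s * y = (y - s)\<^sup>2 + (1 - s\<^sup>2)" by (simp add: power2_eq_square algebra_simps)
  moreover have "s\<^sup>2 < 1" using assms abs_square_less_1 by blast
  ultimately show ?thesis using zero_le_power2[of "y - s"] by linarith
qed

lemma riccati_slope_bound:
  fixes s y t :: real
  assumes "\<bar>s\<bar> < 1" and "0 \<le> t" and "t \<le> 1 + y\<^sup>2 - 2 * s * y"
  shows "(4 - 2 * y\<^sup>2) * t \<le> (2 + y\<^sup>2 - 2 * s * y)\<^sup>2"
proof (cases "4 - 2 * y\<^sup>2 \<le> 0")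
  case True
  then show ?thesis using assms(2) by (smt (verit) mult_nonpos_nonneg zero_le_power2)
next
  case False
  define q where "q = 1 + y\<^sup>2 - 2 * s * y"
  have "(4 - 2 * y\<^sup>2) * t \<le> (4 - 2 * y\<^sup>2) * q"
    using False assms(3) by (simp add: q_def)
  also have "\<dots> = (2 + y\<^sup>2 - 2 * s * y)\<^sup>2 - ((y\<^sup>2 - 2 * s * y)\<^sup>2 + 2 * y\<^sup>2 * q)"
    by (simp add: q_def power2_eq_square algebra_simps)
  also have "\<dots> \<le> (2 + y\<^sup>2 - 2 * s * y)\<^sup>2"
  proof -
    have "0 \<le> 2 * y\<^sup>2 * q" using riccati_rhs_pos[OF assms(1), of y] by (simp add: q_def)
    then show ?thesis using zero_le_power2[of "y\<^sup>2 - 2 * s * y"] by linarith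
  qed
  finally show ?thesis .
qed

lemma G_map_const_mono:
  fixes h h' :: "real \<Rightarrow> real"
  assumes "a \<le> b" and "\<bar>s\<bar> < 1"
    and deriv: "\<And>w. w \<in> {a..b} \<Longrightarrow> (h has_real_derivative h' w) (at w)"
    and slope: "\<And>w. w \<in> {a..b} \<Longrightarrow> 0 \<le> h' w \<and> h' w \<le> 1 + (h w)\<^sup>2 - 2 * s * h w"
  shows "G_map (\<lambda>_. s) h a \<le> G_map (\<lambda>_. s) h b"
  unfolding G_map_def
proof (rule DERIV_nonneg_imp_nondecreasing[OF assms(1)])
  fix x assume x: "a \<le> x" "x \<le> b"
  define D where "D = 2 + (h x)\<^sup>2 - 2 * s * h x"
  have "0 < D" using riccati_rhs_pos[OF assms(2), of "h x"] by (simp add: D_def)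
  have "((\<lambda>w. w - 2 * h w / (2 + (h w)\<^sup>2 - 2 * s * h w)) has_real_derivative
          1 - (4 - 2 * (h x)\<^sup>2) * h' x / D\<^sup>2) (at x)"
    using \<open>0 < D\<close> deriv[of x] x
    by (auto intro!: derivative_eq_intros simp: D_def field_simps power2_eq_square)
  moreover have "(4 - 2 * (h x)\<^sup>2) * h' x \<le> D\<^sup>2"
    using riccati_slope_bound[OF assms(2)] slope[of x] x by (simp add: D_def)
  ultimately show "\<exists>d. ((\<lambda>w. w - 2 * h w / (2 + (h w)\<^sup>2 - 2 * s * h w)) has_real_derivative d) (at x) \<and> 0 \<le> d"
    using \<open>0 < D\<close> by (auto simp: field_simps)
qed

lemma funpow_mem:
  assumes "a \<in> S" and "\<And>x. x \<in> S \<Longrightarrow> f x \<in> S"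
  shows "(f ^^ n) a \<in> S"
  by (induction n) (simp_all add: assms)

lemma incseq_funpow:
  fixes f :: "'a \<Rightarrow> 'a :: order"
  assumes "a \<in> S" and "\<And>x. x \<in> S \<Longrightarrow> f x \<in> S" and "\<And>x. x \<in> S \<Longrightarrow> x \<le> f x"
  shows "incseq (\<lambda>n. (f ^^ n) a)"
  by (rule incseq_SucI) (simp add: assms funpow_mem)

lemma decseq_funpow:
  fixes f :: "'a \<Rightarrow> 'a :: order"
  assumes "a \<in> S" and "\<And>x. x \<in> S \<Longrightarrow> f x \<in> S" and "\<And>x. x \<in> S \<Longrightarrow> f x \<le> x"
  shows "decseq (\<lambda>n. (f ^^ n) a)"
  by (rule decseq_SucI) (simp add: assms funpow_mem)

lemma funpow_tendsto_unique_fixpoint: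
  fixes f :: "real \<Rightarrow> real"
  assumes "a \<in> {c..d}" and into: "\<And>x. x \<in> {c..d} \<Longrightarrow> f x \<in> {c..d}"
    and mono: "monoseq (\<lambda>n. (f ^^ n) a)"
    and cont: "continuous_on {c..d} f"
    and unique_fix: "\<And>x. x \<in> {c..d} \<Longrightarrow> f x = x \<Longrightarrow> x = b"
  shows "(\<lambda>n. (f ^^ n) a) \<longlonglongrightarrow> b"
proof -
  let ?X = "\<lambda>n. (f ^^ n) a"
  have mem: "?X n \<in> {c..d}" for n using funpow_mem assms(1) into .
  then have "Bseq ?X" by (intro Bseq_eq_bounded[of _ c d]) auto
  then obtain L where L: "?X \<longlonglongrightarrow> L" using Bseq_monoseq_convergent mono convergent_def by blast
  have "L \<in> {c..d}" using mem by (intro closed_sequentially[OF closed_atLeastAtMost _ L]) simp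
  have "(\<lambda>n. f (?X n)) \<longlonglongrightarrow> f L"
    using continuous_on_tendsto_compose[OF cont L \<open>L \<in> {c..d}\<close>] mem by simp
  moreover have "(\<lambda>n. f (?X n)) \<longlonglongrightarrow> L" using LIMSEQ_Suc[OF L] by simp
  ultimately have "f L = L" using LIMSEQ_unique by blast
  with L \<open>L \<in> {c..d}\<close> unique_fix show ?thesis by auto
qed

locale riccati_interval =
  fixes a b zs :: real and r h :: "real \<Rightarrow> real"
  assumes r_cont: "continuous_on {a<..<b} r"
    and r_antimono: "\<And>x y. x \<in> {a<..<b} \<Longrightarrow> y \<in> {a<..<b} \<Longrightarrow> x \<le> y \<Longrightarrow> r y \<le> r x"
    and r_bound: "\<And>z. z \<in> {a<..<b} \<Longrightarrow> \<bar>r z\<bar> < 1"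
    and h_ode: "\<And>z. z \<in> {a<..<b} \<Longrightarrow> (h has_real_derivative 1 + (h z)\<^sup>2 - 2 * r z * h z) (at z)"
    and zs_in: "zs \<in> {a<..<b}" and h_zs: "h zs = 0"
begin

lemma G_map_denom_pos: "z \<in> {a<..<b} \<Longrightarrow> 0 < 2 + (h z)\<^sup>2 - 2 * r z * h z"
  using riccati_rhs_pos[OF r_bound, of z "h z"] by simp

lemma h_strict_mono: "strict_mono_on {a<..<b} h"
proof (rule strict_mono_onI)
  fix x y assume "x \<in> {a<..<b}" "y \<in> {a<..<b}" "x < y"
  then show "h x < h y"
    using h_ode riccati_rhs_pos[OF r_bound]
    by (intro DERIV_pos_imp_increasing[OF \<open>x < y\<close>]) (metis greaterThanLessThan_iff le_less_trans less_le_trans)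
qed

lemma h_nonpos: "z \<in> {a<..<b} \<Longrightarrow> z \<le> zs \<Longrightarrow> h z \<le> 0"
  using h_strict_mono zs_in h_zs by (metis order_le_less strict_mono_onD)

lemma h_nonneg: "z \<in> {a<..<b} \<Longrightarrow> zs \<le> z \<Longrightarrow> 0 \<le> h z"
  using h_strict_mono zs_in h_zs by (metis order_le_less strict_mono_onD)

lemma h_eq_zero_iff: "z \<in> {a<..<b} \<Longrightarrow> h z = 0 \<longleftrightarrow> z = zs"
  using h_strict_mono zs_in h_zs by (metis strict_mono_on_eqD)

lemma G_map_fixpoint: "z \<in> {a<..<b} \<Longrightarrow> G_map r h z = z \<Longrightarrow> z = zs"
  using G_map_denom_pos[of z] h_eq_zero_iff[of z] by (simp add: G_map_def)

lemma continuous_on_G_map: "continuous_on {a<..<b} (G_map r h)"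
proof -
  have "continuous_on {a<..<b} h"
    using h_ode by (intro continuous_at_imp_continuous_on) (blast intro: DERIV_isCont)
  then show ?thesis
    unfolding G_map_def using r_cont G_map_denom_pos
    by (intro continuous_intros) (force simp del: greaterThanLessThan_iff)+
qed

lemma G_map_frozen_mono:
  assumes "c \<le> d" and "{c..d} \<subseteq> {a<..<b}" and "z \<in> {a<..<b}"
    and "\<And>w. w \<in> {c..d} \<Longrightarrow> r z * h w \<le> r w * h w"
  shows "G_map (\<lambda>_. r z) h c \<le> G_map (\<lambda>_. r z) h d"
proof (rule G_map_const_mono[OF assms(1) r_bound[OF assms(3)] h_ode])
  fix w assume "w \<in> {c..d}"
  then show "0 \<le> 1 + (h w)\<^sup>2 - 2 * r w * h w \<and> 1 + (h w)\<^sup>2 - 2 * r w * h w \<le> 1 + (h w)\<^sup>2 - 2 * r z * h w"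
    using assms(2,4) riccati_rhs_pos[OF r_bound, of w "h w"] by force
qed (use assms(2) in auto)

lemma G_map_between_below:
  assumes "z \<in> {a<..<b}" and "z \<le> zs"
  shows "z \<le> G_map r h z \<and> G_map r h z \<le> zs"
proof
  show "z \<le> G_map r h z"
    using h_nonpos[OF assms] G_map_denom_pos[OF assms(1)] by (simp add: G_map_def divide_nonpos_pos)
  have "G_map (\<lambda>_. r z) h z \<le> G_map (\<lambda>_. r z) h zs"
  proof (rule G_map_frozen_mono[OF assms(2) _ assms(1)])
    show "{z..zs} \<subseteq> {a<..<b}" using assms(1) zs_in by auto
    fix w assume "w \<in> {z..zs}"
    with \<open>{z..zs} \<subseteq> {a<..<b}\<close> show "r z * h w \<le> r w * h w"
      using r_antimono[OF assms(1)] h_nonpos by (intro mult_right_mono_neg) auto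
  qed
  then show "G_map r h z \<le> zs" by (simp add: G_map_def h_zs)
qed

lemma G_map_between_above:
  assumes "z \<in> {a<..<b}" and "zs \<le> z"
  shows "zs \<le> G_map r h z \<and> G_map r h z \<le> z"
proof
  show "G_map r h z \<le> z"
    using h_nonneg[OF assms] G_map_denom_pos[OF assms(1)] by (simp add: G_map_def)
  have "G_map (\<lambda>_. r z) h zs \<le> G_map (\<lambda>_. r z) h z"
  proof (rule G_map_frozen_mono[OF assms(2) _ assms(1)])
    show "{zs..z} \<subseteq> {a<..<b}" using assms(1) zs_in by auto
    fix w assume "w \<in> {zs..z}"
    with \<open>{zs..z} \<subseteq> {a<..<b}\<close> show "r z * h w \<le> r w * h w"
      using r_antimono[OF _ assms(1)] h_nonneg by (intro mult_right_mono) auto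
  qed
  then show "zs \<le> G_map r h z" by (simp add: G_map_def h_zs)
qed

theorem G_map_iterates_tendsto:
  assumes "z0 \<in> {a<..<b}"
  defines "X \<equiv> \<lambda>n. (G_map r h ^^ n) z0"
  shows "\<forall>n. X n \<in> {a<..<b}" and "mono X \<or> antimono X" and "X \<longlonglongrightarrow> zs"
proof -
  obtain c d where "{c..d} \<subseteq> {a<..<b}" and "z0 \<in> {c..d}"
    and into: "\<And>x. x \<in> {c..d} \<Longrightarrow> G_map r h x \<in> {c..d}" and "mono X \<or> antimono X"
  proof (cases "z0 \<le> zs")
    case True
    have sub: "{z0..zs} \<subseteq> {a<..<b}" using assms(1) zs_in by auto
    have into: "G_map r h x \<in> {z0..zs}" if "x \<in> {z0..zs}" for x
      using G_map_between_below[of x] that sub by force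
    have "mono X"
      unfolding X_def using G_map_between_below sub by (intro incseq_funpow[OF _ into]) (use True in auto)
    then show thesis using that[OF sub _ into] True by simp
  next
    case False
    have sub: "{zs..z0} \<subseteq> {a<..<b}" using assms(1) zs_in by auto
    have into: "G_map r h x \<in> {zs..z0}" if "x \<in> {zs..z0}" for x
      using G_map_between_above[of x] that sub by force
    have "antimono X"
      unfolding X_def using G_map_between_above sub by (intro decseq_funpow[OF _ into]) (use False in auto)
    then show thesis using that[OF sub _ into] False by simp
  qed
  then show "mono X \<or> antimono X" by blast
  have "X n \<in> {c..d}" for n
    unfolding X_def using \<open>z0 \<in> {c..d}\<close> into by (rule funpow_mem)
  with \<open>{c..d} \<subseteq> {a<..<b}\<close> show "\<forall>n. X n \<in> {a<..<b}" by blast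
  show "X \<longlonglongrightarrow> zs"
    unfolding X_def
  proof (rule funpow_tendsto_unique_fixpoint[OF \<open>z0 \<in> {c..d}\<close> into])
    show "monoseq (\<lambda>n. (G_map r h ^^ n) z0)"
      using \<open>mono X \<or> antimono X\<close> monoseq_iff unfolding X_def by blast
    show "continuous_on {c..d} (G_map r h)"
      using continuous_on_subset[OF continuous_on_G_map \<open>{c..d} \<subseteq> {a<..<b}\<close>] .
  qed (use G_map_fixpoint \<open>{c..d} \<subseteq> {a<..<b}\<close> in auto)
qed

end

theorem theorem3p5:
  fixes zw zw' zr zs :: real and r h :: "real \<Rightarrow> real"
  assumes J_ne: "zw < zw'"
    and r_diff: "\<forall>z\<in>{zw<..<zw'}. r differentiable (at z)"
    and r_noninc: "\<forall>x\<in>{zw<..<zw'}. \<forall>y\<in>{zw<..<zw'}. x \<le> y \<longrightarrow> r y \<le> r x"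
    and r_bound: "\<forall>z\<in>{zw<..<zw'}. \<bar>r z\<bar> < 1"
    and zr_in: "zr \<in> {zw<..<zw'}" and zr_zero: "r zr = 0"
    and zr_unique: "\<forall>z\<in>{zw<..<zw'}. r z = 0 \<longrightarrow> z = zr"
    and h_ode: "\<forall>z\<in>{zw<..<zw'}. (h has_real_derivative (1 + (h z)^2 - 2 * r z * h z)) (at z)"
    and zs_in: "zs \<in> {zw<..<zw'}" and zs_zero: "h zs = 0"
    and zs_unique: "\<forall>z\<in>{zw<..<zw'}. h z = 0 \<longrightarrow> z = zs"
  shows "\<forall>z0\<in>{min zr zs..max zr zs}.
           (\<forall>n. ((G_map r h ^^ n) z0) \<in> {zw<..<zw'}
                \<and> 2 + (h ((G_map r h ^^ n) z0))^2 - 2 * r ((G_map r h ^^ n) z0) * h ((G_map r h ^^ n) z0) \<noteq> 0)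
         \<and> (mono (\<lambda>n. (G_map r h ^^ n) z0) \<or> antimono (\<lambda>n. (G_map r h ^^ n) z0))
         \<and> (\<lambda>n. (G_map r h ^^ n) z0) \<longlonglongrightarrow> zs"
proof -
  interpret riccati_interval zw zw' zs r h
  proof
    show "continuous_on {zw<..<zw'} r"
      using r_diff by (intro continuous_at_imp_continuous_on) (metis DERIV_isCont real_differentiable_def)
  qed (use r_noninc r_bound h_ode zs_in zs_zero in auto)
  have "z0 \<in> {zw<..<zw'}" if "z0 \<in> {min zr zs..max zr zs}" for z0
    using that zr_in zs_in by auto
  then show ?thesis
    using G_map_iterates_tendsto G_map_denom_pos by (metis less_irrefl)
qed

end
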